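(* Let $a\in(0,1)$, $k\in(1,\infty)$ and $r,s\in(1,\infty)$. Then (1) $\pi_{rs}\le\sqrt{\pi_{r^2}\pi_{s^2}}\le\sqrt{\pi_r\pi_s}$; (2) $\pi_{r^as^{1-a}}\le a\,\pi_r+(1-a)\,\pi_s$; (3) if moreover $r\le s$, then $\left(\frac{\pi_s}{\pi_r}\right)^k\le\frac{\pi_{s^k}}{\pi_{r^k}}$.
   Context: For $p>1$, $\pi_p=\frac{2\pi}{p\sin(\pi/p)}$. *)

theory Defs
  imports Complex_Main
begin

definition gen_pi :: "real \<Rightarrow> real" where
  "gen_pi p = 2 * pi / (p * sin (pi / p))"

end

theory Submission imports Defs "HOL-Analysis.Convex" begin

text \<open>Substitute \<open>p = exp x\<close>. The function \<open>h x = ln (gen_pi (exp x))\<close> equals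
  \<open>ln (2\<pi>) - x - ln (sin u)\<close> with \<open>u = \<pi> exp (-x) \<in> (0, \<pi>)\<close>; its derivative is \<open>u cot u - 1 \<le> 0\<close>
  and its second derivative \<open>u (u - sin u cos u) / sin\<^sup>2 u\<close> is nonnegative. So \<open>h\<close> is convex and
  nonincreasing on \<open>(0, \<infinity>)\<close>. The first inequality is midpoint convexity of \<open>h\<close> at \<open>2 ln r\<close>
  and \<open>2 ln s\<close>, the second is monotonicity, the third is convexity of \<open>exp \<circ> h\<close>, and the last
  says that \<open>h (k t) - k h t\<close> increases in \<open>t\<close>, because \<open>h'\<close> is nondecreasing.\<close>

lemma sin_mult_cos_le:
  fixes u :: real
  assumes "0 \<le> u"
  shows "sin u * cos u \<le> u"
proof -
  have "sin (2 * u) \<le> 2 * u" using sin_x_le_x[of "2 * u"] assms by simp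
  then show ?thesis by (simp add: sin_double)
qed

lemma mult_cos_le_sin:
  fixes u :: real
  assumes "0 \<le> u" "u \<le> pi"
  shows "u * cos u \<le> sin u"
proof -
  have "(\<lambda>t. sin t - t * cos t) 0 \<le> (\<lambda>t. sin t - t * cos t) u"
  proof (rule DERIV_nonneg_imp_nondecreasing[OF assms(1)])
    fix t assume t: "0 \<le> t" "t \<le> u"
    have "((\<lambda>t. sin t - t * cos t) has_real_derivative (t * sin t)) (at t)"
      by (auto intro!: derivative_eq_intros)
    moreover have "0 \<le> t * sin t" using t assms sin_ge_zero[of t] by simp
    ultimately show "\<exists>y. ((\<lambda>t. sin t - t * cos t) has_real_derivative y) (at t) \<and> 0 \<le> y"
      by blast
  qed
  then show ?thesis by simp
qed

lemma convex_on_exp_comp: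
  fixes h :: "'a::real_vector \<Rightarrow> real"
  assumes "convex_on S h"
  shows "convex_on S (\<lambda>x. exp (h x))"
proof (rule convex_onI)
  show "convex S" using assms convex_on_imp_convex by blast
next
  fix t :: real and x y assume t: "0 < t" "t < 1" and xy: "x \<in> S" "y \<in> S"
  have "exp (h ((1 - t) *\<^sub>R x + t *\<^sub>R y)) \<le> exp ((1 - t) * h x + t * h y)"
    using convex_onD[OF assms, of t x y] t xy by simp
  also have "\<dots> \<le> (1 - t) * exp (h x) + t * exp (h y)"
    using convex_onD[OF exp_convex, of t "h x" "h y"] t by simp
  finally show "exp (h ((1 - t) *\<^sub>R x + t *\<^sub>R y)) \<le> (1 - t) * exp (h x) + t * exp (h y)" .
qed

lemma scaled_diff_nondecreasing:
  fixes f f' :: "real \<Rightarrow> real"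
  assumes f': "\<And>x. 0 < x \<Longrightarrow> (f has_real_derivative f' x) (at x)"
    and f'_mono: "\<And>x y. 0 < x \<Longrightarrow> x \<le> y \<Longrightarrow> f' x \<le> f' y"
    and "1 \<le> k" "0 < x" "x \<le> y"
  shows "f (k * x) - k * f x \<le> f (k * y) - k * f y"
proof (rule DERIV_nonneg_imp_nondecreasing[OF \<open>x \<le> y\<close>])
  fix t assume "x \<le> t" "t \<le> y"
  then have t: "0 < t" "t \<le> k * t" using \<open>0 < x\<close> \<open>1 \<le> k\<close> by auto
  have "((\<lambda>t. f (k * t) - k * f t) has_real_derivative (f' (k * t) * k - k * f' t)) (at t)"
    using t by (auto intro!: derivative_eq_intros DERIV_chain2[of f] f')
  moreover have "0 \<le> f' (k * t) * k - k * f' t"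
    using f'_mono[OF t] \<open>1 \<le> k\<close> by (simp add: algebra_simps)
  ultimately show "\<exists>d. ((\<lambda>t. f (k * t) - k * f t) has_real_derivative d) (at t) \<and> 0 \<le> d"
    by blast
qed

lemma has_real_derivative_mult_cot:
  fixes u :: real
  assumes "sin u \<noteq> 0"
  shows "((\<lambda>u. u * cos u / sin u) has_real_derivative (sin u * cos u - u) / (sin u)\<^sup>2) (at u)"
proof -
  have "u * (cos u * cos u) + u * (sin u * sin u) = u"
    by (metis sin_cos_squared_add power2_eq_square distrib_left mult.right_neutral add.commute)
  then show ?thesis using assms
    by (auto intro!: derivative_eq_intros simp: field_simps power2_eq_square)
qed

definition ln_gen_pi_exp :: "real \<Rightarrow> real" where
  "ln_gen_pi_exp x = ln (2 * pi) - x - ln (sin (pi * exp (- x)))"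

definition ln_gen_pi_exp' :: "real \<Rightarrow> real" where
  "ln_gen_pi_exp' x = pi * exp (- x) * cos (pi * exp (- x)) / sin (pi * exp (- x)) - 1"

definition ln_gen_pi_exp'' :: "real \<Rightarrow> real" where
  "ln_gen_pi_exp'' x = pi * exp (- x) * (pi * exp (- x) - sin (pi * exp (- x)) * cos (pi * exp (- x)))
                         / (sin (pi * exp (- x)))\<^sup>2"

lemma pi_exp_minus_bounds:
  fixes x :: real
  assumes "0 < x"
  shows "0 < pi * exp (- x)" "pi * exp (- x) < pi"
  using assms by auto

lemma sin_pi_exp_minus_pos: "0 < x \<Longrightarrow> 0 < sin (pi * exp (- x))"
  using pi_exp_minus_bounds sin_gt_zero by blast

lemma gen_pi_exp: "0 < x \<Longrightarrow> gen_pi (exp x) = exp (ln_gen_pi_exp x)"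
  using sin_pi_exp_minus_pos[of x]
  by (simp add: gen_pi_def ln_gen_pi_exp_def exp_diff exp_minus divide_inverse)

lemma gen_pi_eq_exp_ln: "1 < p \<Longrightarrow> gen_pi p = exp (ln_gen_pi_exp (ln p))"
  using gen_pi_exp[of "ln p"] by simp

lemma has_real_derivative_ln_gen_pi_exp:
  assumes "0 < x"
  shows "(ln_gen_pi_exp has_real_derivative ln_gen_pi_exp' x) (at x)"
proof -
  have "sin (pi * exp (- x)) > 0" using sin_pi_exp_minus_pos assms by blast
  then show ?thesis
    unfolding ln_gen_pi_exp_def[abs_def] ln_gen_pi_exp'_def
    by (auto intro!: derivative_eq_intros simp: field_simps)
qed

lemma has_real_derivative_ln_gen_pi_exp':
  assumes "0 < x"
  shows "(ln_gen_pi_exp' has_real_derivative ln_gen_pi_exp'' x) (at x)"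
proof -
  define u where "u = pi * exp (- x)"
  have "((\<lambda>x. pi * exp (- x)) has_real_derivative - u) (at x)"
    unfolding u_def by (auto intro!: derivative_eq_intros)
  moreover have "sin u \<noteq> 0" using sin_pi_exp_minus_pos assms u_def by force
  ultimately have "((\<lambda>x. pi * exp (- x) * cos (pi * exp (- x)) / sin (pi * exp (- x)) - 1)
      has_real_derivative ((sin u * cos u - u) / (sin u)\<^sup>2 * - u - 0)) (at x)"
    unfolding u_def by (intro DERIV_diff DERIV_const DERIV_chain2[OF has_real_derivative_mult_cot])
  then show ?thesis
    unfolding ln_gen_pi_exp'_def[abs_def]
    by (simp add: ln_gen_pi_exp''_def u_def[symmetric] field_simps)
qed

lemma ln_gen_pi_exp''_nonneg: "0 < x \<Longrightarrow> 0 \<le> ln_gen_pi_exp'' x"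
  using sin_mult_cos_le[of "pi * exp (- x)"] by (simp add: ln_gen_pi_exp''_def)

lemma ln_gen_pi_exp'_nonpos:
  assumes "0 < x"
  shows "ln_gen_pi_exp' x \<le> 0"
proof -
  define u where "u = pi * exp (- x)"
  have u: "0 < u" "u < pi" using pi_exp_minus_bounds[OF assms] u_def by auto
  then have "u * cos u / sin u \<le> 1"
    using mult_cos_le_sin[of u] sin_gt_zero[of u] by simp
  then show ?thesis unfolding ln_gen_pi_exp'_def u_def[symmetric] by simp
qed

lemma convex_on_ln_gen_pi_exp: "convex_on {0<..} ln_gen_pi_exp"
  by (rule f''_ge0_imp_convex[where f' = ln_gen_pi_exp' and f'' = ln_gen_pi_exp''])
     (auto intro: has_real_derivative_ln_gen_pi_exp has_real_derivative_ln_gen_pi_exp'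
        ln_gen_pi_exp''_nonneg)

lemma ln_gen_pi_exp'_mono:
  assumes "0 < x" "x \<le> y"
  shows "ln_gen_pi_exp' x \<le> ln_gen_pi_exp' y"
  by (rule DERIV_nonneg_imp_nondecreasing[OF assms(2)])
     (use has_real_derivative_ln_gen_pi_exp' ln_gen_pi_exp''_nonneg assms in \<open>meson less_le_trans\<close>)

lemma ln_gen_pi_exp_antimono:
  assumes "0 < x" "x \<le> y"
  shows "ln_gen_pi_exp y \<le> ln_gen_pi_exp x"
  by (rule DERIV_nonpos_imp_nonincreasing[OF assms(2)])
     (use has_real_derivative_ln_gen_pi_exp ln_gen_pi_exp'_nonpos assms in \<open>meson less_le_trans\<close>)

lemma gen_pi_pos: "1 < p \<Longrightarrow> 0 < gen_pi p"
  by (simp add: gen_pi_eq_exp_ln)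

lemma gen_pi_antimono: "1 < p \<Longrightarrow> p \<le> q \<Longrightarrow> gen_pi q \<le> gen_pi p"
  using ln_gen_pi_exp_antimono[of "ln p" "ln q"] by (simp add: gen_pi_eq_exp_ln)

lemma gen_pi_mult_le_sqrt:
  assumes "1 < r" "1 < s"
  shows "gen_pi (r * s) \<le> sqrt (gen_pi (r\<^sup>2) * gen_pi (s\<^sup>2))"
proof (rule real_le_rsqrt)
  define x y where "x = ln r" and "y = ln s"
  have pos: "0 < x" "0 < y" using assms by (auto simp: x_def y_def)
  have "ln_gen_pi_exp ((1 - 1/2) *\<^sub>R (2 * x) + (1/2) *\<^sub>R (2 * y))
          \<le> (1 - 1/2) * ln_gen_pi_exp (2 * x) + (1/2) * ln_gen_pi_exp (2 * y)"
    by (rule convex_onD[OF convex_on_ln_gen_pi_exp]) (use pos in auto)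
  then have "2 * ln_gen_pi_exp (x + y) \<le> ln_gen_pi_exp (2 * x) + ln_gen_pi_exp (2 * y)"
    by simp
  moreover have "r = exp x" "s = exp y" using assms by (simp_all add: x_def y_def)
  then have "r * s = exp (x + y)" "r\<^sup>2 = exp (2 * x)" "s\<^sup>2 = exp (2 * y)"
    by (simp_all add: exp_add[symmetric] power2_eq_square)
  ultimately show "(gen_pi (r * s))\<^sup>2 \<le> gen_pi (r\<^sup>2) * gen_pi (s\<^sup>2)"
    using pos by (simp add: gen_pi_exp power2_eq_square exp_add[symmetric])
qed

lemma sqrt_gen_pi_squares_le:
  assumes "1 < r" "1 < s"
  shows "sqrt (gen_pi (r\<^sup>2) * gen_pi (s\<^sup>2)) \<le> sqrt (gen_pi r * gen_pi s)"
proof -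
  have "r \<le> r\<^sup>2" "s \<le> s\<^sup>2" using assms by (simp_all add: power2_eq_square)
  then have "gen_pi (r\<^sup>2) \<le> gen_pi r" "gen_pi (s\<^sup>2) \<le> gen_pi s"
    using assms gen_pi_antimono by auto
  moreover have "0 < gen_pi r" "0 < gen_pi (s\<^sup>2)"
    using assms \<open>s \<le> s\<^sup>2\<close> by (auto intro: gen_pi_pos)
  ultimately show ?thesis
    by (intro real_sqrt_le_mono mult_mono) auto
qed

lemma gen_pi_powr_convex:
  assumes "0 \<le> a" "a \<le> 1" "1 < r" "1 < s"
  shows "gen_pi (r powr a * s powr (1 - a)) \<le> a * gen_pi r + (1 - a) * gen_pi s"
proof -
  define x y where "x = ln r" and "y = ln s"
  have pos: "0 < x" "0 < y" using assms by (auto simp: x_def y_def)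
  have "r powr a * s powr (1 - a) = exp ((1 - a) *\<^sub>R y + a *\<^sub>R x)"
    using assms by (simp add: powr_def x_def y_def exp_add)
  moreover have "exp (ln_gen_pi_exp ((1 - a) *\<^sub>R y + a *\<^sub>R x))
                   \<le> (1 - a) * exp (ln_gen_pi_exp y) + a * exp (ln_gen_pi_exp x)"
    by (rule convex_onD[OF convex_on_exp_comp[OF convex_on_ln_gen_pi_exp]]) (use assms pos in auto)
  moreover have "0 < (1 - a) *\<^sub>R y + a *\<^sub>R x"
    using assms pos by (cases "a = 0") (auto intro: add_nonneg_pos add_pos_nonneg)
  ultimately show ?thesis
    using assms by (simp add: gen_pi_exp gen_pi_eq_exp_ln x_def y_def)
qed

lemma gen_pi_ratio_powr_le:
  assumes "1 \<le> k" "1 < r" "r \<le> s"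
  shows "(gen_pi s / gen_pi r) powr k \<le> gen_pi (s powr k) / gen_pi (r powr k)"
proof -
  define x y where "x = ln r" and "y = ln s"
  have pos: "0 < x" "x \<le> y" using assms by (auto simp: x_def y_def)
  then have "k * (ln_gen_pi_exp y - ln_gen_pi_exp x)
               \<le> ln_gen_pi_exp (k * y) - ln_gen_pi_exp (k * x)"
    using scaled_diff_nondecreasing[OF has_real_derivative_ln_gen_pi_exp ln_gen_pi_exp'_mono
        \<open>1 \<le> k\<close> pos]
    by (simp add: algebra_simps)
  moreover have "0 < k * x" "0 < k * y" using pos assms by auto
  ultimately show ?thesis
    using assms pos
    by (simp add: gen_pi_eq_exp_ln gen_pi_exp powr_def x_def y_def exp_diff[symmetric]
        mult.commute)
qed

theorem lemma3p6:
  fixes a k r s :: real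
  assumes "0 < a" "a < 1" "1 < k" "1 < r" "1 < s"
  shows "gen_pi (r * s) \<le> sqrt (gen_pi (r\<^sup>2) * gen_pi (s\<^sup>2))
       \<and> sqrt (gen_pi (r\<^sup>2) * gen_pi (s\<^sup>2)) \<le> sqrt (gen_pi r * gen_pi s)
       \<and> gen_pi (r powr a * s powr (1 - a)) \<le> a * gen_pi r + (1 - a) * gen_pi s
       \<and> (r \<le> s \<longrightarrow> (gen_pi s / gen_pi r) powr k \<le> gen_pi (s powr k) / gen_pi (r powr k))"
  using assms gen_pi_mult_le_sqrt sqrt_gen_pi_squares_le gen_pi_powr_convex gen_pi_ratio_powr_le
  by simp

end
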